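(* Every 10-dimensional filiform Lie algebra over $\mathbb{K}$ admits a basis $\{X_0,\dots,X_9\}$ in which the bracket is given by the family $F_{10}$ below, for some parameters $a_1,a_2,a_4,a_5,a_7,a_8,\dots,a_{15}\in\mathbb{K}$ satisfying $a_1(2a_2+7a_4+7a_7)=0$, $3a_4^2+3a_4a_7-2a_2a_7=0$, and $a_1(2a_9+5a_{11})-2a_2a_{10}+a_4(7a_8-2a_{10})+a_7(-3a_5+2a_8-7a_{10})=0$.
   Context: $\mathbb{K}$ is algebraically closed of characteristic $0$; filiform means nilpotent of nilindex $\dim-1$. The family $F_{10}$: $\mu(X_0,X_i)=X_{i+1}$ ($1\le i\le 8$), $\mu(X_2,X_7)=a_1X_9$, $\mu(X_1,X_7)=a_1X_8+a_2X_9$, $\mu(X_3,X_6)=-a_1X_9$, $\mu(X_2,X_6)=a_4X_9$, $\mu(X_1,X_6)=a_1X_7+(a_2+a_4)X_8+a_5X_9$, $\mu(X_4,X_5)=a_1X_9$, $\mu(X_3,X_5)=a_7X_9$, $\mu(X_2,X_5)=(a_4+a_7)X_8+a_8X_9$, $\mu(X_1,X_5)=a_1X_6+(a_2+2a_4+a_7)X_7+(a_5+a_8)X_8+a_9X_9$, $\mu(X_3,X_4)=a_7X_8+a_{10}X_9$, $\mu(X_2,X_4)=(a_4+2a_7)X_7+(a_8+a_{10})X_8+a_{11}X_9$, $\mu(X_1,X_4)=a_1X_5+(a_2+3a_4+3a_7)X_6+(a_5+2a_8+a_{10})X_7+(a_9+a_{11})X_8+a_{12}X_9$, $\mu(X_2,X_3)=(a_4+2a_7)X_6+(a_8+a_{10})X_7+a_{11}X_8+a_{13}X_9$,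 $\mu(X_1,X_3)=a_1X_4+(a_2+4a_4+5a_7)X_5+(a_5+3a_8+2a_{10})X_6+(a_9+2a_{11})X_7+(a_{12}+a_{13})X_8+a_{14}X_9$, $\mu(X_1,X_2)=a_1X_3+(a_2+4a_4+5a_7)X_4+(a_5+3a_8+2a_{10})X_5+(a_9+2a_{11})X_6+(a_{12}+a_{13})X_7+a_{14}X_8+a_{15}X_9$, all other brackets $\mu(X_i,X_j)$ ($i<j$) zero. *)

theory Defs
  imports Main "HOL-Computational_Algebra.Polynomial"
begin

definition alg_closed :: "'k::field itself \<Rightarrow> bool" where
  "alg_closed _ \<longleftrightarrow> (\<forall>p :: 'k poly. degree p > 0 \<longrightarrow> (\<exists>x. poly p x = 0))"

definition lie_algebra :: "('k::field \<Rightarrow> 'v::ab_group_add \<Rightarrow> 'v) \<Rightarrow> ('v \<Rightarrow> 'v \<Rightarrow> 'v) \<Rightarrow> bool" where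
  "lie_algebra scale br \<longleftrightarrow>
     vector_space scale \<and>
     (\<forall>x y z. br (x + y) z = br x z + br y z) \<and>
     (\<forall>x y z. br x (y + z) = br x y + br x z) \<and>
     (\<forall>c x y. br (scale c x) y = scale c (br x y)) \<and>
     (\<forall>c x y. br x (scale c y) = scale c (br x y)) \<and>
     (\<forall>x. br x x = 0) \<and>
     (\<forall>x y z. br x (br y z) + br y (br z x) + br z (br x y) = 0)"

text \<open>Lower central series: lcs 0 = C^1 = g, lcs (k+1) = C^(k+2) = [g, C^(k+1)].\<close>
fun lcs :: "('k::field \<Rightarrow> 'v::ab_group_add \<Rightarrow> 'v) \<Rightarrow> ('v \<Rightarrow> 'v \<Rightarrow> 'v) \<Rightarrow> nat \<Rightarrow> 'v set" where
  "lcs scale br 0 = UNIV"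
| "lcs scale br (Suc k) = module.span scale {br x y | x y. y \<in> lcs scale br k}"

text \<open>Nilpotent of nilindex p (p \<ge> 1): C^(p+1) = 0 but C^p \<noteq> 0.\<close>
definition nilpotent_nilindex :: "('k::field \<Rightarrow> 'v::ab_group_add \<Rightarrow> 'v) \<Rightarrow> ('v \<Rightarrow> 'v \<Rightarrow> 'v) \<Rightarrow> nat \<Rightarrow> bool" where
  "nilpotent_nilindex scale br p \<longleftrightarrow>
     1 \<le> p \<and> lcs scale br p = {0} \<and> lcs scale br (p - 1) \<noteq> {0}"

definition filiform :: "('k::field \<Rightarrow> 'v::ab_group_add \<Rightarrow> 'v) \<Rightarrow> ('v \<Rightarrow> 'v \<Rightarrow> 'v) \<Rightarrow> bool" where
  "filiform scale br \<longleftrightarrow>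
     lie_algebra scale br \<and> nilpotent_nilindex scale br (vector_space.dim scale (UNIV :: 'v set) - 1)"

text \<open>Coefficient list (w.r.t. X_0..X_9) placed at the top indices.\<close>
definition top10 :: "'k::zero list \<Rightarrow> 'k list" where
  "top10 cs = replicate (10 - length cs) 0 @ cs"

text \<open>The family F_10: coefficients of mu(X_i, X_j) (for i < j) in the basis X_0..X_9.
  The parameter function a is only used at indices 1,2,4,5,7,...,15.\<close>
definition F10 :: "(nat \<Rightarrow> 'k::field) \<Rightarrow> nat \<Rightarrow> nat \<Rightarrow> 'k list" where
  "F10 a i j =
    (if i = 0 \<and> 1 \<le> j \<and> j \<le> 8 then map (\<lambda>k. if k = Suc j then 1 else 0) [0..<10]
     else if (i, j) = (2, 7) then top10 [a 1]
     else if (i, j) = (1, 7) then top10 [a 1, a 2]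
     else if (i, j) = (3, 6) then top10 [- a 1]
     else if (i, j) = (2, 6) then top10 [a 4]
     else if (i, j) = (1, 6) then top10 [a 1, a 2 + a 4, a 5]
     else if (i, j) = (4, 5) then top10 [a 1]
     else if (i, j) = (3, 5) then top10 [a 7]
     else if (i, j) = (2, 5) then top10 [a 4 + a 7, a 8]
     else if (i, j) = (1, 5) then top10 [a 1, a 2 + 2 * a 4 + a 7, a 5 + a 8, a 9]
     else if (i, j) = (3, 4) then top10 [a 7, a 10]
     else if (i, j) = (2, 4) then top10 [a 4 + 2 * a 7, a 8 + a 10, a 11]
     else if (i, j) = (1, 4) then top10 [a 1, a 2 + 3 * a 4 + 3 * a 7, a 5 + 2 * a 8 + a 10,
                                         a 9 + a 11, a 12]
     else if (i, j) = (2, 3) then top10 [a 4 + 2 * a 7, a 8 + a 10, a 11, a 13]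
     else if (i, j) = (1, 3) then top10 [a 1, a 2 + 4 * a 4 + 5 * a 7, a 5 + 3 * a 8 + 2 * a 10,
                                         a 9 + 2 * a 11, a 12 + a 13, a 14]
     else if (i, j) = (1, 2) then top10 [a 1, a 2 + 4 * a 4 + 5 * a 7, a 5 + 3 * a 8 + 2 * a 10,
                                         a 9 + 2 * a 11, a 12 + a 13, a 14, a 15]
     else replicate 10 0)"

end

theory Submission
  imports Defs
begin

text \<open>
  Let C^k be the lower central series of a filiform Lie algebra g of dimension n: g/C^2 is
  2-dimensional and every further quotient C^k/C^(k+1) is 1-dimensional. Choose X0 and q spanning g
  modulo C^2 such that ad X0 maps no C^k (2 \<le> k \<le> n - 2) into C^(k+2); the elements that do form
  proper subspaces, and in characteristic 0 a generic point of a line avoids all of them. Then the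
  iterated brackets ad(X0)^i q span the successive quotients, and X0, q - s X0 and ad(X0)^i q
  (1 \<le> i \<le> n - 2) form an adapted basis: [X0, Xi] = X(i+1), and [X1, Xj] lies in the span of the
  Xk with k > j. In its coordinates the Jacobi identity with X0 expresses all structure constants
  through those of X1. For n = 10 the identities [Xi, Xi] = 0 and two Jacobi identities, which take
  the form of a vanishing square, cut these down to the 13 parameters of F10; three further Jacobi
  identities are the stated polynomial constraints.
\<close>

section \<open>Lie algebras and the lower central series\<close>

locale lie_alg =
  fixes scale :: "'k::field \<Rightarrow> 'v::ab_group_add \<Rightarrow> 'v" (infixr \<open>*s\<close> 75)
    and br :: "'v \<Rightarrow> 'v \<Rightarrow> 'v"
  assumes lie_algebra: "lie_algebra scale br"
begin

sublocale vector_space scale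
  using lie_algebra unfolding lie_algebra_def by blast

lemma br_add_left: "br (x + y) z = br x z + br y z"
  and br_add_right: "br x (y + z) = br x y + br x z"
  and br_scale_left: "br (c *s x) y = c *s br x y"
  and br_scale_right: "br x (c *s y) = c *s br x y"
  and br_self [simp]: "br x x = 0"
  and jacobi: "br x (br y z) + br y (br z x) + br z (br x y) = 0"
  using lie_algebra unfolding lie_algebra_def by blast+

lemma br_anticomm: "br y x = - br x y"
proof -
  have "br (x + y) (x + y) = br x x + br y x + (br x y + br y y)"
    by (simp only: br_add_left br_add_right)
  then have "br y x + br x y = 0"
    by simp
  then show ?thesis
    by (simp add: eq_neg_iff_add_eq_0)
qed

lemma br_zero_left [simp]: "br 0 x = 0"
  using br_scale_left[of 0 0 x] by simp

lemma br_zero_right [simp]: "br x 0 = 0"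
  using br_scale_right[of x 0 0] by simp

lemma br_neg_right: "br x (- y) = - br x y"
  using br_scale_right[of x "- 1" y] by simp

lemma br_diff_left: "br (x - y) z = br x z - br y z"
  using br_add_left[of x "- y" z] br_scale_left[of "- 1" y z] by simp

lemma br_diff_right: "br x (y - z) = br x y - br x z"
  using br_add_right[of x y "- z"] br_scale_right[of x "- 1" z] by simp

lemma br_sum_right: "br x (sum f A) = (\<Sum>a\<in>A. br x (f a))"
  by (induction A rule: infinite_finite_induct) (auto simp: br_add_right)

lemma subspace_br_preimage_right: "subspace S \<Longrightarrow> subspace {y. br x y \<in> S}"
  by (auto simp: subspace_def br_add_right br_scale_right)

abbreviation L :: "nat \<Rightarrow> 'v set" where
  "L k \<equiv> lcs scale br k"

lemma lcs_Suc: "L (Suc k) = span {br x y | x y. y \<in> L k}"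
  by simp

declare lcs.simps(2) [simp del]

lemma subspace_lcs: "subspace (L k)"
  by (cases k) (auto simp: lcs_Suc)

lemma span_lcs [simp]: "span (L k) = L k"
  by (simp add: subspace_lcs)

lemma br_in_lcs_Suc: "y \<in> L k \<Longrightarrow> br x y \<in> L (Suc k)"
  unfolding lcs_Suc by (rule span_base) blast

lemma br_in_lcs_Suc': "x \<in> L k \<Longrightarrow> br x y \<in> L (Suc k)"
  using br_in_lcs_Suc[of x k y] subspace_neg[OF subspace_lcs] by (metis br_anticomm minus_minus)

lemma lcs_Suc_subset: "L (Suc k) \<subseteq> L k"
proof (induction k)
  case (Suc k)
  then show ?case
    by (simp only: lcs_Suc) (rule span_mono, blast)
qed simp

lemma lcs_stable:
  assumes "L (Suc k) = L k" and "k \<le> m"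
  shows "L (Suc m) = L m"
  using assms(2)
proof (induction m rule: dec_induct)
  case (step m)
  have "L (Suc (Suc m)) = span {br x y | x y. y \<in> L (Suc m)}" by (fact lcs_Suc)
  also have "\<dots> = span {br x y | x y. y \<in> L m}" by (simp only: step.IH)
  also have "\<dots> = L (Suc m)" by (simp only: lcs_Suc)
  finally show ?case .
qed (fact assms(1))

lemma br_lcs_lcs: "x \<in> L i \<Longrightarrow> y \<in> L j \<Longrightarrow> br x y \<in> L (i + j + 1)"
proof (induction i arbitrary: x j y)
  case 0
  then show ?case using br_in_lcs_Suc by simp
next
  case (Suc i)
  let ?S = "{x. \<forall>j y. y \<in> L j \<longrightarrow> br x y \<in> L (Suc i + j + 1)}"
  have "subspace ?S"
    using subspace_lcs by (auto simp: subspace_def br_add_left br_scale_left)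
  moreover have "br u v \<in> ?S" if "v \<in> L i" for u v
  proof (intro CollectI allI impI)
    fix j y assume y: "y \<in> L j"
    have "br (br u v) y = br u (br v y) + br v (br y u)"
      using jacobi[of u v y] br_anticomm[of y "br u v"]
      by (simp add: algebra_simps eq_neg_iff_add_eq_0)
    moreover have "br u (br v y) \<in> L (Suc i + j + 1)"
      using br_in_lcs_Suc[OF Suc.IH[OF that y]] by simp
    moreover have "br v (br y u) \<in> L (Suc i + j + 1)"
      using Suc.IH[OF that br_in_lcs_Suc'[OF y]] by simp
    ultimately show "br (br u v) y \<in> L (Suc i + j + 1)"
      by (simp add: subspace_add[OF subspace_lcs])
  qed
  ultimately have "L (Suc i) \<subseteq> ?S"
    by (simp only: lcs_Suc) (rule span_minimal, blast)
  then show ?case using Suc.prems by blast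
qed

lemma lcs_1_subset_lcs_2_if_generated_by_two:
  assumes span: "span (insert a (insert b (L 1))) = UNIV" and ab: "br a b \<in> L 2"
  shows "L 1 \<subseteq> L 2"
proof -
  have L12: "br u v \<in> L 2" "br v u \<in> L 2" if "u \<in> L 1" for u v
    using br_in_lcs_Suc[OF that] br_in_lcs_Suc'[OF that] by (simp_all add: numeral_2_eq_2)
  have ba: "br b a \<in> L 2"
    using subspace_neg[OF subspace_lcs ab] by (simp add: br_anticomm[of b a])
  have "span (insert a (insert b (L 1))) \<subseteq> {v. br w v \<in> L 2}" if "w \<in> {a, b}" for w
    using that ab ba L12 subspace_0[OF subspace_lcs]
    by (intro span_minimal subspace_br_preimage_right subspace_lcs) auto
  then have "br a v \<in> L 2" "br b v \<in> L 2" for v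
    using span by blast+
  then have "span (insert a (insert b (L 1))) \<subseteq> {u. \<forall>v. br u v \<in> L 2}"
    using L12 subspace_lcs
    by (intro span_minimal) (auto simp: subspace_def br_add_left br_scale_left)
  then have "br u v \<in> L 2" for u v
    using span by blast
  then show ?thesis
    by (simp only: lcs_Suc One_nat_def) (rule span_minimal[OF _ subspace_lcs], auto)
qed

end

section \<open>Adapted bases and their structure constants\<close>

locale adapted_basis = lie_alg scale br
  for scale :: "'k::field \<Rightarrow> 'v::ab_group_add \<Rightarrow> 'v" (infixr \<open>*s\<close> 75) and br +
  fixes n :: nat and X :: "nat \<Rightarrow> 'v"
  assumes inj_on_basis: "inj_on X {..<n}"
    and independent_basis: "independent (X ` {..<n})"
    and span_basis: "span (X ` {..<n}) = UNIV"
    and br_X0: "i < n \<Longrightarrow> br (X 0) (X i) = (if 1 \<le> i \<and> i \<le> n - 2 then X (Suc i) else 0)"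
    and br_X1_filtered: "2 \<le> j \<Longrightarrow> j < n \<Longrightarrow> br (X 1) (X j) \<in> span (X ` {Suc j..<n})"
    and br_X1_penultimate: "br (X 1) (X (n - 2)) = 0"
begin

definition coord :: "nat \<Rightarrow> 'v \<Rightarrow> 'k" where
  "coord k v = representation (X ` {..<n}) v (X k)"

definition structure_const :: "nat \<Rightarrow> nat \<Rightarrow> nat \<Rightarrow> 'k" where
  "structure_const i j k = coord k (br (X i) (X j))"

lemma sum_coord: "(\<Sum>k<n. coord k v *s X k) = v"
proof -
  have "(\<Sum>b\<in>X ` {..<n}. representation (X ` {..<n}) v b *s b) = v"
    using independent_basis span_basis by (intro sum_representation_eq) auto
  then show ?thesis
    by (simp add: coord_def sum.reindex[OF inj_on_basis])
qed

lemma coord_add: "coord k (u + v) = coord k u + coord k v"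
  and coord_scale: "coord k (a *s v) = a * coord k v"
  and coord_neg: "coord k (- v) = - coord k v"
  and coord_diff: "coord k (u - v) = coord k u - coord k v"
  and coord_sum: "coord k (sum f A) = (\<Sum>a\<in>A. coord k (f a))"
  using independent_basis span_basis
  by (simp_all add: coord_def representation_add representation_scale representation_neg
      representation_diff representation_sum)

lemma coord_zero [simp]: "coord k 0 = 0"
  using coord_scale[of k 0 0] by simp

lemma coord_basis: "k < n \<Longrightarrow> m < n \<Longrightarrow> coord k (X m) = (if k = m then 1 else 0)"
  using independent_basis inj_on_basis
  by (simp add: coord_def representation_basis inj_on_eq_iff)

lemma coord_eq_0_if_in_span:
  assumes "k < n" "k \<notin> S" "S \<subseteq> {..<n}" "v \<in> span (X ` S)"
  shows "coord k v = 0"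
proof -
  have "representation (X ` {..<n}) v = representation (X ` S) v"
    using assms independent_basis by (intro representation_extend) auto
  moreover have "X k \<notin> X ` S"
    using assms inj_on_basis by (auto simp: inj_on_eq_iff)
  ultimately show ?thesis
    unfolding coord_def by (metis representation_ne_zero)
qed

lemma structure_const_antisym: "structure_const j i k = - structure_const i j k"
  by (simp add: structure_const_def br_anticomm[of "X j"] coord_neg)

lemma coord_br: "coord t (br (X i) v) = (\<Sum>m<n. coord m v * structure_const i m t)"
proof -
  have "br (X i) v = (\<Sum>m<n. coord m v *s br (X i) (X m))"
    by (subst (1) sum_coord[of v, symmetric]) (simp add: br_sum_right br_scale_right)
  then show ?thesis
    by (simp add: coord_sum coord_scale structure_const_def)
qed

lemma structure_const_X0:
  "j < n \<Longrightarrow> k < n \<Longrightarrow> structure_const 0 j k = (if 1 \<le> j \<and> j \<le> n - 2 \<and> k = Suc j then 1 else 0)"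
  by (auto simp: structure_const_def br_X0 coord_basis)

lemma coord_br_X0: "k < n \<Longrightarrow> coord k (br (X 0) v) = (if 2 \<le> k then coord (k - 1) v else 0)"
proof -
  assume k: "k < n"
  have "coord k (br (X 0) v) = (\<Sum>m<n. if m = k - 1 \<and> 2 \<le> k then coord m v else 0)"
    unfolding coord_br using k by (intro sum.cong) (auto simp: structure_const_X0)
  also have "\<dots> = (if 2 \<le> k then coord (k - 1) v else 0)"
    using k by (cases "2 \<le> k") (simp_all add: sum.delta)
  finally show ?thesis .
qed

lemma structure_const_recursion:
  assumes "1 \<le> i" "i \<le> n - 2" "1 \<le> j" "j \<le> n - 1" "k < n"
  shows "structure_const (Suc i) j k
    = (if 2 \<le> k then structure_const i j (k - 1) else 0) - (if j \<le> n - 2 then structure_const i (Suc j) k else 0)"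
proof -
  have "br (X (Suc i)) (X j) = - br (X j) (br (X 0) (X i))"
    using assms br_X0[of i] br_anticomm[of "X (Suc i)"] by simp
  also have "\<dots> = br (X 0) (br (X i) (X j)) + br (X i) (br (X j) (X 0))"
    using jacobi[of "X 0" "X i" "X j"] by (metis add_eq_0_iff2)
  also have "\<dots> = br (X 0) (br (X i) (X j)) - br (X i) (br (X 0) (X j))"
    by (simp add: br_anticomm[of "X j" "X 0"] br_neg_right)
  finally have "br (X (Suc i)) (X j) = br (X 0) (br (X i) (X j)) - br (X i) (br (X 0) (X j))" .
  moreover have "coord k (br (X i) (br (X 0) (X j))) = (if j \<le> n - 2 then structure_const i (Suc j) k else 0)"
    using assms br_X0[of j] by (simp add: structure_const_def)
  ultimately show ?thesis
    using assms by (simp add: coord_diff coord_br_X0 structure_const_def)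
qed

lemma structure_const_X1_filtered: "2 \<le> j \<Longrightarrow> j < n \<Longrightarrow> k \<le> j \<Longrightarrow> structure_const 1 j k = 0"
  unfolding structure_const_def
  using br_X1_filtered[of j] by (intro coord_eq_0_if_in_span[of _ "{Suc j..<n}"]) auto

lemma structure_const_X1_penultimate: "structure_const 1 (n - 2) (n - 1) = 0"
  using br_X1_penultimate by (simp add: structure_const_def)

lemma structure_const_jacobi:
  "(\<Sum>m<n. structure_const j l m * structure_const i m t) + (\<Sum>m<n. structure_const l i m * structure_const j m t)
    + (\<Sum>m<n. structure_const i j m * structure_const l m t) = 0"
  using arg_cong[OF jacobi[of "X i" "X j" "X l"], of "coord t"]
  by (simp add: coord_add coord_br[of t i] coord_br[of t j] coord_br[of t l] structure_const_def[symmetric])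

end

section \<open>Filiform Lie algebras\<close>

locale filiform_lie_algebra = lie_alg scale br
  for scale :: "'k::field_char_0 \<Rightarrow> 'v::ab_group_add \<Rightarrow> 'v" (infixr \<open>*s\<close> 75) and br +
  fixes n :: nat
  assumes filiform: "filiform scale br"
    and dim_UNIV_eq: "dim UNIV = n"
    and three_le_dim: "3 \<le> n"
begin

lemma lcs_last: "L (n - 1) = {0}"
  and lcs_penultimate_ne: "L (n - 2) \<noteq> {0}"
proof -
  have "nilpotent_nilindex scale br (n - 1)"
    using filiform dim_UNIV_eq unfolding filiform_def by simp
  then show "L (n - 1) = {0}" "L (n - 2) \<noteq> {0}"
    unfolding nilpotent_nilindex_def by (simp_all add: diff_diff_left numeral_2_eq_2)
qed

lemma lcs_strict: "k \<le> n - 2 \<Longrightarrow> L (Suc k) \<noteq> L k"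
proof
  assume "k \<le> n - 2" "L (Suc k) = L k"
  then have "L (Suc (n - 2)) = L (n - 2)"
    using lcs_stable[of k "n - 2"] by simp
  moreover have "Suc (n - 2) = n - 1"
    using three_le_dim by simp
  ultimately show False
    using lcs_last lcs_penultimate_ne by simp
qed

lemma exists_finite_basis: "\<exists>B. independent B \<and> span B = UNIV \<and> finite B \<and> card B = n"
proof -
  obtain B where "independent B" "UNIV \<subseteq> span B" "card B = n"
    using basis_exists[of UNIV] dim_UNIV_eq by blast
  moreover have "finite B"
    using \<open>card B = n\<close> three_le_dim card.infinite by fastforce
  ultimately show ?thesis by blast
qed

definition fbasis :: "'v set" where
  "fbasis = (SOME B. independent B \<and> span B = UNIV \<and> finite B \<and> card B = n)"

lemma fbasis: "independent fbasis" "span fbasis = UNIV" "finite fbasis" "card fbasis = n"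
  using someI_ex[OF exists_finite_basis] unfolding fbasis_def by blast+

sublocale fd: finite_dimensional_vector_space scale fbasis
  by unfold_locales (fact fbasis)+

lemma span_eq_UNIV_iff_dim: "span S = UNIV \<longleftrightarrow> dim S = n"
  using fd.dim_eq_full fbasis by (simp add: fd.dimension_def)

lemma dim_lcs_Suc_less: "k \<le> n - 2 \<Longrightarrow> dim (L (Suc k)) < dim (L k)"
  using fd.dim_psubset[of "L (Suc k)" "L k"] lcs_strict[of k] lcs_Suc_subset[of k] by auto

lemma lcs_1_not_subset_lcs_2: "\<not> L 1 \<subseteq> L 2"
proof
  assume "L 1 \<subseteq> L 2"
  then have "L (Suc 1) = L 1"
    using lcs_Suc_subset[of 1] by (simp add: numeral_2_eq_2)
  moreover have "1 \<le> n - 2"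
    using three_le_dim by simp
  ultimately show False
    using lcs_strict[of 1] by simp
qed

lemma dim_lcs_1_le: "dim (L 1) \<le> n - 2"
proof (rule ccontr)
  assume "\<not> dim (L 1) \<le> n - 2"
  moreover have "dim (L 1) < n"
    using dim_lcs_Suc_less[of 0] dim_UNIV_eq by simp
  ultimately have dim_L1: "dim (L 1) = n - 1" by linarith
  obtain x where x: "x \<notin> L 1"
    using lcs_strict[of 0] by auto
  have "dim (insert x (L 1)) = n"
    using fd.dim_insert[of x "L 1"] x dim_L1 three_le_dim by simp
  then have "span (insert x (insert x (L 1))) = UNIV"
    by (simp add: span_eq_UNIV_iff_dim)
  then have "L 1 \<subseteq> L 2"
    by (rule lcs_1_subset_lcs_2_if_generated_by_two) (simp add: subspace_0[OF subspace_lcs])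
  then show False
    using lcs_1_not_subset_lcs_2 by blast
qed

lemma dim_lcs: "1 \<le> k \<Longrightarrow> k \<le> n - 1 \<Longrightarrow> dim (L k) = n - 1 - k"
proof -
  have lower: "dim (L (n - 1 - m)) \<ge> m" if "m \<le> n - 1" for m
    using that
  proof (induction m)
    case (Suc m)
    then have "dim (L (Suc (n - 1 - Suc m))) < dim (L (n - 1 - Suc m))"
      by (intro dim_lcs_Suc_less) simp
    moreover have "Suc (n - 1 - Suc m) = n - 1 - m"
      using Suc.prems by simp
    ultimately show ?case
      using Suc by simp
  qed simp
  have upper: "dim (L k) \<le> n - 1 - k" if "1 \<le> k" "k \<le> n - 1" for k
    using that
  proof (induction k rule: dec_induct)
    case base
    then show ?case using dim_lcs_1_le by simp
  next
    case (step k)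
    then have "k \<le> n - 2" by linarith
    with step show ?case using dim_lcs_Suc_less[of k] by linarith
  qed
  show "1 \<le> k \<Longrightarrow> k \<le> n - 1 \<Longrightarrow> dim (L k) = n - 1 - k"
    using lower[of "n - 1 - k"] upper[of k] by simp
qed

lemma exists_complement_pair: "\<exists>p q. span (insert q (insert p (L 1))) = UNIV"
proof -
  obtain p where p: "p \<notin> L 1"
    using lcs_strict[of 0] by auto
  have dim_p: "dim (insert p (L 1)) = n - 1"
    using fd.dim_insert[of p "L 1"] p dim_lcs[of 1] three_le_dim by simp
  then obtain q where q: "q \<notin> span (insert p (L 1))"
    using span_eq_UNIV_iff_dim[of "insert p (L 1)"] three_le_dim by auto
  have "dim (insert q (insert p (L 1))) = n"
    using fd.dim_insert[of q "insert p (L 1)"] q dim_p three_le_dim by simp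
  then show ?thesis
    using span_eq_UNIV_iff_dim by blast
qed

definition lcs_centralizer :: "nat \<Rightarrow> 'v set" where
  "lcs_centralizer k = {x. \<forall>y\<in>L k. br x y \<in> L (k + 2)}"

lemma subspace_lcs_centralizer: "subspace (lcs_centralizer k)"
  using subspace_lcs by (auto simp: subspace_def lcs_centralizer_def br_add_left br_scale_left)

lemma lcs_1_subset_lcs_centralizer: "L 1 \<subseteq> lcs_centralizer k"
  unfolding lcs_centralizer_def using br_lcs_lcs[of _ 1 _ k] by (auto simp: add.commute)

lemma lcs_centralizer_ne_UNIV: "k \<le> n - 3 \<Longrightarrow> lcs_centralizer k \<noteq> UNIV"
proof
  assume k: "k \<le> n - 3" and "lcs_centralizer k = UNIV"
  then have "{br x y | x y. y \<in> L k} \<subseteq> L (Suc (Suc k))"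
    by (auto simp: lcs_centralizer_def set_eq_iff)
  then have "L (Suc k) \<subseteq> L (Suc (Suc k))"
    unfolding lcs_Suc[of k] by (rule span_minimal[OF _ subspace_lcs])
  then have "L (Suc (Suc k)) = L (Suc k)"
    using lcs_Suc_subset[of "Suc k"] by blast
  moreover have "Suc k \<le> n - 2"
    using k three_le_dim by linarith
  ultimately show False
    using lcs_strict[of "Suc k"] by simp
qed

text \<open>This is where characteristic 0 enters: distinct t give distinct points p + t q.\<close>
lemma finite_line_points_in_subspace:
  assumes "subspace S" and "\<not> (p \<in> S \<and> q \<in> S)"
  shows "finite {t::nat. p + of_nat t *s q \<in> S}"
proof -
  have uniq: "t1 = t2" if "p + of_nat t1 *s q \<in> S" "p + of_nat t2 *s q \<in> S" for t1 t2
  proof (rule ccontr)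
    assume "t1 \<noteq> t2"
    have "(p + of_nat t1 *s q) - (p + of_nat t2 *s q) \<in> S"
      using that by (intro subspace_diff[OF assms(1)])
    then have "(of_nat t1 - of_nat t2 :: 'k) *s q \<in> S"
      by (simp add: scale_left_diff_distrib)
    moreover have "(of_nat t1 - of_nat t2 :: 'k) \<noteq> 0"
      using \<open>t1 \<noteq> t2\<close> by simp
    ultimately have "q \<in> S"
      using subspace_scale[OF assms(1), of _ "inverse (of_nat t1 - of_nat t2 :: 'k)"] by force
    moreover have "p \<in> S"
      using subspace_diff[OF assms(1) that(1) subspace_scale[OF assms(1) \<open>q \<in> S\<close>, of "of_nat t1"]]
      by simp
    ultimately show False
      using assms(2) by blast
  qed
  show ?thesis
  proof (cases "{t. p + of_nat t *s q \<in> S} = {}")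
    case False
    then obtain t0 where "p + of_nat t0 *s q \<in> S"
      by blast
    with uniq have "{t. p + of_nat t *s q \<in> S} \<subseteq> {t0}"
      by blast
    then show ?thesis
      by (rule finite_subset) simp
  qed simp
qed

lemma exists_filiform_generators:
  obtains q X0 where "span (insert q (insert X0 (L 1))) = UNIV"
    and "\<And>k. 1 \<le> k \<Longrightarrow> k \<le> n - 3 \<Longrightarrow> X0 \<notin> lcs_centralizer k"
proof -
  obtain p q where pq: "span (insert q (insert p (L 1))) = UNIV"
    using exists_complement_pair by blast
  have "\<not> (p \<in> lcs_centralizer k \<and> q \<in> lcs_centralizer k)" if "k \<le> n - 3" for k
  proof
    assume "p \<in> lcs_centralizer k \<and> q \<in> lcs_centralizer k"
    then have "insert q (insert p (L 1)) \<subseteq> lcs_centralizer k"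
      using lcs_1_subset_lcs_centralizer by blast
    then have "span (insert q (insert p (L 1))) \<subseteq> lcs_centralizer k"
      by (rule span_minimal[OF _ subspace_lcs_centralizer])
    then show False
      using pq lcs_centralizer_ne_UNIV[OF that] by blast
  qed
  then have "finite {t::nat. p + of_nat t *s q \<in> lcs_centralizer k}" if "k \<le> n - 3" for k
    using that by (intro finite_line_points_in_subspace subspace_lcs_centralizer)
  then have "finite (\<Union>k\<in>{1..n - 3}. {t::nat. p + of_nat t *s q \<in> lcs_centralizer k})"
    by simp
  then obtain t where t: "t \<notin> (\<Union>k\<in>{1..n - 3}. {t::nat. p + of_nat t *s q \<in> lcs_centralizer k})"
    using ex_new_if_finite[OF infinite_UNIV_nat] by meson
  let ?X0 = "p + of_nat t *s q"
  have "?X0 - of_nat t *s q \<in> span (insert q (insert ?X0 (L 1)))"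
    by (intro span_diff span_scale span_base) auto
  then have "insert q (insert p (L 1)) \<subseteq> span (insert q (insert ?X0 (L 1)))"
    by (auto intro: span_base)
  then have "span (insert q (insert p (L 1))) \<subseteq> span (insert q (insert ?X0 (L 1)))"
    by (rule span_minimal[OF _ subspace_span])
  with pq have "span (insert q (insert ?X0 (L 1))) = UNIV"
    by auto
  moreover have "?X0 \<notin> lcs_centralizer k" if "1 \<le> k" "k \<le> n - 3" for k
    using t that by auto
  ultimately show ?thesis
    by (rule that)
qed

end

section \<open>Existence of an adapted basis\<close>

locale filiform_generators = filiform_lie_algebra +
  fixes X0 q
  assumes span_generators: "span (insert q (insert X0 (L 1))) = UNIV"
    and X0_notin_lcs_centralizer: "1 \<le> k \<Longrightarrow> k \<le> n - 3 \<Longrightarrow> X0 \<notin> lcs_centralizer k"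
begin

definition Y where
  "Y i = (br X0 ^^ i) q"

lemma Y_0 [simp]: "Y 0 = q"
  and Y_Suc: "Y (Suc i) = br X0 (Y i)"
  by (simp_all add: Y_def)

lemma Y_in_lcs: "Y i \<in> L i"
  by (induction i) (simp_all add: Y_Suc br_in_lcs_Suc)

lemma lcs_eq_span_insert:
  assumes "1 \<le> i" "i \<le> n - 2" "y \<in> L i" "y \<notin> L (Suc i)"
  shows "L i = span (insert y (L (Suc i)))"
proof -
  have sub: "span (insert y (L (Suc i))) \<subseteq> L i"
    using assms lcs_Suc_subset[of i] by (intro span_minimal[OF _ subspace_lcs]) auto
  have "dim (insert y (L (Suc i))) = dim (L i)"
    using fd.dim_insert[of y "L (Suc i)"] assms dim_lcs[of i] dim_lcs[of "Suc i"] by simp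
  then show ?thesis
    using fd.subspace_dim_equal[OF subspace_span subspace_lcs sub] by simp
qed

lemma Y_notin_lcs_Suc: "1 \<le> i \<Longrightarrow> i \<le> n - 2 \<Longrightarrow> Y i \<notin> L (Suc i)"
proof (induction i rule: dec_induct)
  case base
  show ?case
  proof
    assume "Y 1 \<in> L (Suc 1)"
    then have "br q X0 \<in> L 2"
      using subspace_neg[OF subspace_lcs] br_anticomm[of q X0]
      by (metis Y_0 Y_Suc One_nat_def Suc_1)
    then have "L 1 \<subseteq> L 2"
      by (rule lcs_1_subset_lcs_2_if_generated_by_two[OF span_generators])
    then show False
      using lcs_1_not_subset_lcs_2 by blast
  qed
next
  case (step i)
  show ?case
  proof
    assume Y_Suc_in: "Y (Suc i) \<in> L (Suc (Suc i))"
    have "L i = span (insert (Y i) (L (Suc i)))"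
      using step Y_in_lcs by (intro lcs_eq_span_insert) simp_all
    also have "\<dots> \<subseteq> {y. br X0 y \<in> L (Suc (Suc i))}"
      using Y_Suc_in br_in_lcs_Suc
      by (intro span_minimal subspace_br_preimage_right subspace_lcs) (auto simp: Y_Suc)
    finally have "X0 \<in> lcs_centralizer i"
      by (auto simp: lcs_centralizer_def)
    then show False
      using X0_notin_lcs_centralizer step by simp
  qed
qed

lemma Y_last: "Y (n - 1) = 0"
  using Y_in_lcs[of "n - 1"] lcs_last by simp

lemma lcs_eq_span_Y: "i \<le> n - 1 \<Longrightarrow> 1 \<le> i \<Longrightarrow> L i = span (Y ` {i..n - 2})"
proof (induction i rule: inc_induct)
  case base
  then show ?case
    using lcs_last three_le_dim by simp
next
  case (step i)
  then have i: "1 \<le> i" "i \<le> n - 2"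
    by linarith+
  have "L i = span (insert (Y i) (L (Suc i)))"
    using lcs_eq_span_insert[OF i Y_in_lcs Y_notin_lcs_Suc[OF i]] .
  also have "\<dots> = span (insert (Y i) (Y ` {Suc i..n - 2}))"
    using step.IH by (simp add: span_insert span_span)
  also have "insert (Y i) (Y ` {Suc i..n - 2}) = Y ` {i..n - 2}"
    using step by (simp add: Icc_eq_insert_lb_nat)
  finally show ?case .
qed

lemma exists_X1_correction: "\<exists>s. br q (Y (n - 3)) = s *s Y (n - 2)"
proof -
  have "Suc (n - 3) = n - 2"
    using three_le_dim by simp
  then have "br q (Y (n - 3)) \<in> L (n - 2)"
    using br_in_lcs_Suc[OF Y_in_lcs[of "n - 3"]] by metis
  also have "L (n - 2) = span {Y (n - 2)}"
    using lcs_eq_span_Y[of "n - 2"] three_le_dim by simp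
  finally show ?thesis
    by (auto simp: span_singleton)
qed

definition X1_correction where
  "X1_correction = (SOME s. br q (Y (n - 3)) = s *s Y (n - 2))"

lemma br_q_Y: "br q (Y (n - 3)) = X1_correction *s Y (n - 2)"
  unfolding X1_correction_def by (rule someI_ex[OF exists_X1_correction])

definition adapted where
  "adapted i = (if i = 0 then X0 else if i = 1 then q - X1_correction *s X0 else Y (i - 1))"

lemma adapted_Suc: "1 \<le> i \<Longrightarrow> adapted (Suc i) = Y i"
  by (simp add: adapted_def)

lemma br_X0_adapted: "i < n \<Longrightarrow> br (adapted 0) (adapted i) = (if 1 \<le> i \<and> i \<le> n - 2 then adapted (Suc i) else 0)"
proof -
  assume "i < n"
  then consider "i = 0" | "i = 1" | "2 \<le> i" "i \<le> n - 2" | "i = Suc (n - 2)"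
    by linarith
  then show ?thesis
  proof cases
    case 2
    moreover have "1 \<le> n - 2"
      using three_le_dim by linarith
    ultimately show ?thesis
      by (simp add: adapted_def br_diff_right br_scale_right Y_Suc)
  next
    case 3
    then have "i = Suc (i - 1)" by simp
    with 3 show ?thesis
      using Y_Suc[of "i - 1"] by (simp add: adapted_def)
  next
    case 4
    then have "adapted i = Y (n - 2)"
      using three_le_dim by (simp add: adapted_def)
    moreover have "Y (Suc (n - 2)) = 0"
      using Y_last three_le_dim by (simp add: Suc_diff_Suc numeral_2_eq_2)
    ultimately show ?thesis
      using 4 Y_Suc[of "n - 2"] by (simp add: adapted_def)
  qed (simp add: adapted_def)
qed

lemma adapted_image: "1 \<le> j \<Longrightarrow> adapted ` {Suc j..<n} = Y ` {j..n - 2}"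
proof -
  assume "1 \<le> j"
  have "{Suc j..<n} = {Suc j..Suc (n - 2)}"
    using three_le_dim by auto
  then have "adapted ` {Suc j..<n} = adapted ` Suc ` {j..n - 2}"
    by (simp only: image_Suc_atLeastAtMost)
  also have "\<dots> = Y ` {j..n - 2}"
    unfolding image_image using \<open>1 \<le> j\<close> by (intro image_cong) (auto simp: adapted_Suc)
  finally show ?thesis .
qed

lemma br_X1_adapted_filtered:
  "2 \<le> j \<Longrightarrow> j < n \<Longrightarrow> br (adapted 1) (adapted j) \<in> span (adapted ` {Suc j..<n})"
proof -
  assume j: "2 \<le> j" "j < n"
  then have "br (adapted 1) (adapted j) \<in> L (Suc (j - 1))"
    using Y_in_lcs[of "j - 1"] by (intro br_in_lcs_Suc) (simp add: adapted_def)
  also have "L (Suc (j - 1)) = span (Y ` {j..n - 2})"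
    using j lcs_eq_span_Y[of j] by simp
  finally show ?thesis
    using j adapted_image[of j] by simp
qed

lemma br_X1_adapted_penultimate: "br (adapted 1) (adapted (n - 2)) = 0"
proof (cases "n = 3")
  case False
  then have "n - 2 = Suc (Suc (n - 4))" "n - 3 = Suc (n - 4)"
    using three_le_dim by simp_all
  then have "adapted (n - 2) = Y (n - 3)" and "Y (n - 2) = br X0 (Y (n - 3))"
    using Y_Suc[of "n - 3"] by (simp_all add: adapted_def)
  then show ?thesis
    by (simp add: adapted_def br_diff_left br_scale_left br_q_Y)
qed simp

lemma span_adapted: "span (adapted ` {..<n}) = UNIV"
proof -
  have "L 1 = span (adapted ` {2..<n})"
    using lcs_eq_span_Y[of 1] adapted_image[of 1] three_le_dim by (simp add: numeral_2_eq_2)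
  also have "\<dots> \<subseteq> span (adapted ` {..<n})"
    by (intro span_mono) auto
  finally have "L 1 \<subseteq> span (adapted ` {..<n})" .
  moreover have X0: "X0 \<in> span (adapted ` {..<n})"
    and X1: "q - X1_correction *s X0 \<in> span (adapted ` {..<n})"
    using three_le_dim by (auto intro!: span_base image_eqI[of _ adapted 0] image_eqI[of _ adapted 1] simp: adapted_def)
  moreover have "q \<in> span (adapted ` {..<n})"
    using span_add[OF X1 span_scale[OF X0, of X1_correction]] by simp
  ultimately have "span (insert q (insert X0 (L 1))) \<subseteq> span (adapted ` {..<n})"
    by (intro span_minimal[OF _ subspace_span]) auto
  then show ?thesis
    using span_generators by auto
qed

lemma adapted_basis: "adapted_basis scale br n adapted"
proof -
  have "n \<le> card (adapted ` {..<n})"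
    using span_card_ge_dim[of "adapted ` {..<n}" UNIV] span_adapted dim_UNIV_eq by simp
  moreover have "card (adapted ` {..<n}) \<le> n"
    using card_image_le[of "{..<n}" adapted] by simp
  ultimately have card: "card (adapted ` {..<n}) = n"
    by simp
  then have "inj_on adapted {..<n}"
    by (simp add: inj_on_iff_eq_card)
  moreover have "independent (adapted ` {..<n})"
    using fd.card_le_dim_spanning[of "adapted ` {..<n}" UNIV] span_adapted card dim_UNIV_eq by simp
  ultimately show ?thesis
    using span_adapted br_X0_adapted br_X1_adapted_filtered br_X1_adapted_penultimate
    by (intro adapted_basis.intro[OF lie_alg_axioms] adapted_basis_axioms.intro) blast+
qed

end

lemma (in filiform_lie_algebra) exists_adapted_basis: "\<exists>X. adapted_basis scale br n X"
proof -
  obtain q X0 where "span (insert q (insert X0 (L 1))) = UNIV"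
    and "\<And>k. 1 \<le> k \<Longrightarrow> k \<le> n - 3 \<Longrightarrow> X0 \<notin> lcs_centralizer k"
    by (rule exists_filiform_generators) fast
  then interpret filiform_generators scale br n X0 q
    by (intro filiform_generators.intro filiform_lie_algebra_axioms filiform_generators_axioms.intro)
  show ?thesis
    using adapted_basis by blast
qed

section \<open>Structure constants in dimension 10\<close>

lemma replicate_numeral: "replicate (numeral n) x = x # replicate (pred_numeral n) x"
  by (simp add: numeral_eq_Suc)

lemma replicate_one: "replicate 1 x = [x]"
  by simp

lemma sum_lessThan_10: "(\<Sum>m<(10::nat). f m) = f 0 + f 1 + f 2 + f 3 + f 4 + f 5 + f 6 + f 7 + f 8 + f 9"
  by (simp add: eval_nat_numeral)

lemma map_upt_10: "map f [0..<10] = [f 0, f 1, f 2, f 3, f 4, f 5, f 6, f 7, f 8, f 9]"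
  by (simp add: eval_nat_numeral)

lemma less_10_cases:
  "(k::nat) < 10 \<Longrightarrow> k = 0 \<or> k = 1 \<or> k = 2 \<or> k = 3 \<or> k = 4 \<or> k = 5 \<or> k = 6 \<or> k = 7 \<or> k = 8 \<or> k = 9"
  by auto

locale filiform10_structure_constants =
  fixes c :: "nat \<Rightarrow> nat \<Rightarrow> nat \<Rightarrow> 'k::field_char_0"
  assumes X0_row: "j < 10 \<Longrightarrow> k < 10 \<Longrightarrow> c 0 j k = (if 1 \<le> j \<and> j \<le> 8 \<and> k = Suc j then 1 else 0)"
    and antisym: "c j i k = - c i j k"
    and recursion: "1 \<le> i \<Longrightarrow> i \<le> 8 \<Longrightarrow> 1 \<le> j \<Longrightarrow> j \<le> 9 \<Longrightarrow> k < 10 \<Longrightarrow>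
      c (Suc i) j k = (if 2 \<le> k then c i j (k - 1) else 0) - (if j \<le> 8 then c i (Suc j) k else 0)"
    and X1_row: "2 \<le> j \<Longrightarrow> j \<le> 9 \<Longrightarrow> k \<le> j \<Longrightarrow> c 1 j k = 0"
    and X1_penultimate: "c 1 8 9 = 0"
    and jacobi: "(\<Sum>m<10. c j l m * c i m t) + (\<Sum>m<10. c l i m * c j m t) + (\<Sum>m<10. c i j m * c l m t) = 0"
begin

lemma self: "c i i k = 0"
  using antisym[of i i k] by simp

lemma swap: "j < i \<Longrightarrow> c i j k = - c j i k"
  by (rule antisym)

lemma reduce_row: "2 \<le> i \<Longrightarrow> i \<le> 9 \<Longrightarrow> 1 \<le> j \<Longrightarrow> j \<le> 9 \<Longrightarrow> k < 10 \<Longrightarrow>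
  c i j k = (if 2 \<le> k then c (i - 1) j (k - 1) else 0) - (if j \<le> 8 then c (i - 1) (Suc j) k else 0)"
  using recursion[of "i - 1" j k] by simp

text \<open>Unfolding c i i k = 0 for i = 2, 3, 4 by the recursion expresses the odd columns of
  row 1 through the even ones. Simp has to keep 1 as a numeral for these rules to match.\<close>
lemma X1_row_3: "c 1 3 k = c 1 2 (k - 1)" if "k < 10"
  using less_10_cases[OF that] self[of 2 k]
  by (elim disjE) (simp_all add: reduce_row X1_row One_nat_def[symmetric] del: One_nat_def)

lemma X1_row_5: "c 1 5 k = 2 * c 1 4 (k - 1) - c 1 2 (k - 3)" if "k < 10"
  using less_10_cases[OF that] self[of 3 k]
  by (elim disjE) (simp_all add: reduce_row X1_row X1_row_3 One_nat_def[symmetric] algebra_simps del: One_nat_def)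

lemma X1_row_7: "c 1 7 k = 3 * c 1 6 (k - 1) - 5 * c 1 4 (k - 3) + 3 * c 1 2 (k - 5)" if "k < 10"
  using less_10_cases[OF that] self[of 4 k]
  by (elim disjE) (simp_all add: reduce_row X1_row X1_row_3 X1_row_5 One_nat_def[symmetric] algebra_simps del: One_nat_def)

lemmas normalize = sum_lessThan_10 swap reduce_row X1_row X1_row_3 X1_row_5 X1_row_7 X0_row X1_penultimate One_nat_def[symmetric]

definition jacobiator :: "nat \<Rightarrow> nat \<Rightarrow> nat \<Rightarrow> nat \<Rightarrow> 'k" where
  "jacobiator i j l t = (\<Sum>m<10. c j l m * c i m t) + (\<Sum>m<10. c l i m * c j m t) + (\<Sum>m<10. c i j m * c l m t)"

lemma jacobiator_eq_0: "jacobiator i j l t = 0"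
  using jacobi by (simp add: jacobiator_def)

lemma jacobiator_1_2_3_6: "jacobiator 1 2 3 6 = - 2 * (c 1 2 3 - c 1 4 5)\<^sup>2"
  by (simp add: jacobiator_def normalize algebra_simps power2_eq_square del: One_nat_def)

lemma X1_row_4_5: "c 1 4 5 = c 1 2 3"
  using jacobiator_eq_0[of 1 2 3 6] unfolding jacobiator_1_2_3_6 by simp

lemma jacobiator_1_2_5_8: "jacobiator 1 2 5 8 = - 3 * (c 1 2 3 - c 1 6 7)\<^sup>2"
  by (simp add: jacobiator_def normalize X1_row_4_5 algebra_simps power2_eq_square del: One_nat_def)

lemma X1_row_6_7: "c 1 6 7 = c 1 2 3"
  using jacobiator_eq_0[of 1 2 5 8] unfolding jacobiator_1_2_5_8 by simp

text \<open>Obtained by solving the linear system that row 1 of F10 imposes on its parameters.\<close>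
definition F10_params :: "nat \<Rightarrow> 'k" where
  "F10_params n =
    (if n = 1 then c 1 2 3
     else if n = 2 then 3 * c 1 2 4 - 5 * c 1 4 6 + 3 * c 1 6 8
     else if n = 4 then - 3 * c 1 2 4 + 5 * c 1 4 6 - 2 * c 1 6 8
     else if n = 5 then c 1 6 9
     else if n = 7 then 2 * c 1 2 4 - 3 * c 1 4 6 + c 1 6 8
     else if n = 8 then - c 1 2 5 + 2 * c 1 4 7 - c 1 6 9
     else if n = 9 then - c 1 2 6 + 2 * c 1 4 8
     else if n = 10 then 2 * c 1 2 5 - 3 * c 1 4 7 + c 1 6 9
     else if n = 11 then c 1 2 6 - c 1 4 8
     else if n = 12 then c 1 4 9
     else if n = 13 then c 1 2 7 - c 1 4 9
     else if n = 14 then c 1 2 8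
     else if n = 15 then c 1 2 9
     else 0)"

lemma F10_params_simps:
  "F10_params 1 = c 1 2 3" "F10_params 2 = 3 * c 1 2 4 - 5 * c 1 4 6 + 3 * c 1 6 8"
  "F10_params 4 = - 3 * c 1 2 4 + 5 * c 1 4 6 - 2 * c 1 6 8" "F10_params 5 = c 1 6 9"
  "F10_params 7 = 2 * c 1 2 4 - 3 * c 1 4 6 + c 1 6 8" "F10_params 8 = - c 1 2 5 + 2 * c 1 4 7 - c 1 6 9"
  "F10_params 9 = - c 1 2 6 + 2 * c 1 4 8" "F10_params 10 = 2 * c 1 2 5 - 3 * c 1 4 7 + c 1 6 9"
  "F10_params 11 = c 1 2 6 - c 1 4 8" "F10_params 12 = c 1 4 9" "F10_params 13 = c 1 2 7 - c 1 4 9"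
  "F10_params 14 = c 1 2 8" "F10_params 15 = c 1 2 9"
  by (simp_all add: F10_params_def)

lemma F10_F10_params: "i < j \<Longrightarrow> j < 10 \<Longrightarrow> F10 F10_params i j = map (c i j) [0..<10]"
proof -
  assume "i < j" "j < 10"
  then have "j = 1 \<or> j = 2 \<or> j = 3 \<or> j = 4 \<or> j = 5 \<or> j = 6 \<or> j = 7 \<or> j = 8 \<or> j = 9"
    "i = 0 \<or> i = 1 \<or> i = 2 \<or> i = 3 \<or> i = 4 \<or> i = 5 \<or> i = 6 \<or> i = 7 \<or> i = 8"
    by auto
  then show ?thesis
    using \<open>i < j\<close>
    by (elim disjE) (simp_all add: F10_def top10_def map_upt_10 replicate_numeral replicate_one normalize
      X1_row_4_5 X1_row_6_7 F10_params_simps algebra_simps del: One_nat_def)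
qed

lemma jacobiator_1_2_5_9:
  "jacobiator 1 2 5 9 = - (F10_params 1 * (2 * F10_params 2 + 7 * F10_params 4 + 7 * F10_params 7))"
  by (simp add: jacobiator_def normalize X1_row_4_5 X1_row_6_7 F10_params_simps algebra_simps del: One_nat_def)

lemma jacobiator_1_2_3_8:
  "jacobiator 1 2 3 8 = - (3 * F10_params 4 ^ 2 + 3 * F10_params 4 * F10_params 7 - 2 * F10_params 2 * F10_params 7)"
  by (simp add: jacobiator_def normalize X1_row_4_5 X1_row_6_7 F10_params_simps algebra_simps
      power2_eq_square del: One_nat_def)

lemma jacobiator_1_2_3_9:
  "jacobiator 1 2 3 9 = - (F10_params 1 * (2 * F10_params 9 + 5 * F10_params 11) - 2 * F10_params 2 * F10_params 10
    + F10_params 4 * (7 * F10_params 8 - 2 * F10_params 10)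
    + F10_params 7 * (- 3 * F10_params 5 + 2 * F10_params 8 - 7 * F10_params 10))"
  by (simp add: jacobiator_def normalize X1_row_4_5 X1_row_6_7 F10_params_simps algebra_simps del: One_nat_def)

lemma F10_params_constraints:
  "F10_params 1 * (2 * F10_params 2 + 7 * F10_params 4 + 7 * F10_params 7) = 0"
  "3 * F10_params 4 ^ 2 + 3 * F10_params 4 * F10_params 7 - 2 * F10_params 2 * F10_params 7 = 0"
  "F10_params 1 * (2 * F10_params 9 + 5 * F10_params 11) - 2 * F10_params 2 * F10_params 10
    + F10_params 4 * (7 * F10_params 8 - 2 * F10_params 10)
    + F10_params 7 * (- 3 * F10_params 5 + 2 * F10_params 8 - 7 * F10_params 10) = 0"
  using jacobiator_eq_0[of 1 2 5 9] jacobiator_eq_0[of 1 2 3 8] jacobiator_eq_0[of 1 2 3 9]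
  unfolding jacobiator_1_2_5_9 jacobiator_1_2_3_8 jacobiator_1_2_3_9 neg_equal_0_iff_equal .

end

lemma filiform10_structure_constants_adapted_basis:
  fixes scale :: "'k::field_char_0 \<Rightarrow> 'v::ab_group_add \<Rightarrow> 'v"
  assumes "adapted_basis scale br 10 X"
  shows "filiform10_structure_constants (adapted_basis.structure_const scale br 10 X)"
proof -
  interpret adapted_basis scale br 10 X
    by fact
  show ?thesis
  proof (rule filiform10_structure_constants.intro)
    show "structure_const 0 j k = (if 1 \<le> j \<and> j \<le> 8 \<and> k = Suc j then 1 else 0)"
      if "j < 10" "k < 10" for j k
      using structure_const_X0 that by simp
    show "structure_const (Suc i) j k = (if 2 \<le> k then structure_const i j (k - 1) else 0)
      - (if j \<le> 8 then structure_const i (Suc j) k else 0)"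
      if "1 \<le> i" "i \<le> 8" "1 \<le> j" "j \<le> 9" "k < 10" for i j k
      using structure_const_recursion[of i j k] that by simp
    show "structure_const 1 j k = 0" if "2 \<le> j" "j \<le> 9" "k \<le> j" for j k
      using structure_const_X1_filtered[of j k] that by simp
    show "structure_const 1 8 9 = 0"
      using structure_const_X1_penultimate by simp
  qed (fact structure_const_antisym structure_const_jacobi)+
qed

theorem proposition28:
  fixes scale :: "'k::field_char_0 \<Rightarrow> 'v::ab_group_add \<Rightarrow> 'v"
    and br :: "'v \<Rightarrow> 'v \<Rightarrow> 'v"
  assumes "alg_closed TYPE('k)"
    and "lie_algebra scale br"
    and "vector_space.dim scale (UNIV :: 'v set) = 10"
    and "filiform scale br"
  shows "\<exists>(X :: nat \<Rightarrow> 'v) (a :: nat \<Rightarrow> 'k).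
           inj_on X {..<10} \<and>
           \<not> module.dependent scale (X ` {..<10}) \<and>
           module.span scale (X ` {..<10}) = UNIV \<and>
           (\<forall>i j. i < j \<and> j < 10 \<longrightarrow>
              br (X i) (X j) = (\<Sum>k<10. scale (F10 a i j ! k) (X k))) \<and>
           a 1 * (2 * a 2 + 7 * a 4 + 7 * a 7) = 0 \<and>
           3 * a 4 ^ 2 + 3 * a 4 * a 7 - 2 * a 2 * a 7 = 0 \<and>
           a 1 * (2 * a 9 + 5 * a 11) - 2 * a 2 * a 10 + a 4 * (7 * a 8 - 2 * a 10)
             + a 7 * (- 3 * a 5 + 2 * a 8 - 7 * a 10) = 0"
proof -
  interpret filiform_lie_algebra scale br 10
    using assms(2-4) by (simp add: filiform_lie_algebra_def filiform_lie_algebra_axioms_def lie_alg_def)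
  obtain X where "adapted_basis scale br 10 X"
    using exists_adapted_basis by blast
  then interpret B: adapted_basis scale br 10 X .
  interpret C: filiform10_structure_constants B.structure_const
    using filiform10_structure_constants_adapted_basis \<open>adapted_basis scale br 10 X\<close> .
  have "br (X i) (X j) = (\<Sum>k<10. scale (F10 C.F10_params i j ! k) (X k))" if "i < j" "j < 10" for i j
    using B.sum_coord[of "br (X i) (X j)"] C.F10_F10_params[OF that]
    by (simp add: B.structure_const_def)
  then show ?thesis
    using B.inj_on_basis B.independent_basis B.span_basis C.F10_params_constraints by blast
qed

end
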